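(* Let $\varphi=(\mathfrak f_1,\dots,\mathfrak f_r)$ be a flag with $r>1$ and $\mathfrak g\notin\varphi$, and fix either version $B=X$ or $B=D$. Then the butterfly $B[\varphi]$ is the join of $B[\mathfrak f_1]$ and the simplex $/(\mathfrak f_2,\dots,\mathfrak f_r)/$: two closed segments joining a point of $B[\mathfrak f_1]$ to a point of $/(\mathfrak f_2,\dots,\mathfrak f_r)/$ can intersect only at their endpoints, so that the map $(x,\kappa,y)\mapsto(1-\kappa)x+\kappa y$ from the topological join $/(\mathfrak f_2,\dots,\mathfrak f_r)/ * B[\mathfrak f_1]$ onto $B[\varphi]$ is a homeomorphism.
   Context: $\mathfrak g$ is the Lie algebra of a compact Lie group with Euclidean inner product $Q$ satisfying $Q([X,Y],Z)=Q(X,[Y,Z])$; linear operators are symmetric if $Q(AX,Y)=Q(X,AY)$. For symmetric $A$ and $a\in\mathbb R$, $F_a$ is the span of eigenvectors with eigenvalue $\le a$; $A$ is filtering if $[F_a,F_b]\subseteq F_{a+b}$ for all $a,b$; $\mathfrak F_+$ is the set of filtering symmetric operators with nonnegative spectrum and trace $1$. $\mathfrak h\subsetneq\mathfrak g$ is a fixed subalgebra, $\mathcal A$ a compact group of automorphisms of $\mathfrak g$ preserving $\mathfrak h$ and $Q$. For an $\mathcal A$-invariant subalgebra $\mathfrak k$ with $\mathfrak h\subsetneq\mathfrak k\subsetneq\mathfrak g$: $\bar\chi^{\mathfrak k}=\frac{1}{\dim(\mathfrak g/\mathfrak k)}(1_{\mathfrak g}-1_{\mathfrak k})$; $D[\mathfrak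 k]$ is the set of symmetric operators with nonnegative spectrum and trace $1$ commuting with all elements of $\mathcal A$, annihilating $\mathfrak k$ and commuting with $\mathrm{ad}(X)$, $X\in\mathfrak k$; $X[\mathfrak k]=D[\mathfrak k]\cap\mathfrak F_+$. A flag is a sequence $\varphi=(\mathfrak f_1,\dots,\mathfrak f_r)$, $r\ge1$, of $\mathcal A$-invariant subalgebras with $\mathfrak g\supseteq\mathfrak f_1\supsetneq\dots\supsetneq\mathfrak f_r\supsetneq\mathfrak h$; for a flag not containing $\mathfrak g$, $/\varphi/$ is the convex hull of $\{\bar\chi^{\mathfrak f_i}\}$. Butterflies ($B=X$ or $B=D$): if $r>1$ and $\mathfrak f_1\ne\mathfrak g$, $B[\varphi]$ is the union of all closed segments joining a point of $B[\mathfrak f_1]$ to a point of $/(\mathfrak f_2,\dots,\mathfrak f_r)/$. *)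

theory Defs
  imports "HOL-Analysis.Analysis"
begin

section \<open>Compact Lie algebra g: a Euclidean space with a Lie bracket for which the inner product is ad-invariant\<close>

definition lie_bracket :: "('a::euclidean_space \<Rightarrow> 'a \<Rightarrow> 'a) \<Rightarrow> bool" where
  "lie_bracket br \<longleftrightarrow> bilinear br \<and> (\<forall>x. br x x = 0) \<and>
     (\<forall>x y z. br x (br y z) + br y (br z x) + br z (br x y) = 0)"

definition ad_invariant_inner :: "('a::euclidean_space \<Rightarrow> 'a \<Rightarrow> 'a) \<Rightarrow> bool" where
  "ad_invariant_inner br \<longleftrightarrow> (\<forall>x y z. inner (br x y) z = inner x (br y z))"

definition subalgebra :: "('a::euclidean_space \<Rightarrow> 'a \<Rightarrow> 'a) \<Rightarrow> 'a set \<Rightarrow> bool" where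
  "subalgebra br k \<longleftrightarrow> subspace k \<and> (\<forall>x\<in>k. \<forall>y\<in>k. br x y \<in> k)"

definition symmetric_op :: "('a::euclidean_space \<Rightarrow>\<^sub>L 'a) \<Rightarrow> bool" where
  "symmetric_op A \<longleftrightarrow> (\<forall>x y. inner (blinfun_apply A x) y = inner x (blinfun_apply A y))"

definition Fsub :: "('a::euclidean_space \<Rightarrow>\<^sub>L 'a) \<Rightarrow> real \<Rightarrow> 'a set" where
  "Fsub A a = span {v. v \<noteq> 0 \<and> (\<exists>l. l \<le> a \<and> blinfun_apply A v = l *\<^sub>R v)}"

definition filtering :: "('a::euclidean_space \<Rightarrow> 'a \<Rightarrow> 'a) \<Rightarrow> ('a \<Rightarrow>\<^sub>L 'a) \<Rightarrow> bool" where
  "filtering br A \<longleftrightarrow> (\<forall>a b. \<forall>x\<in>Fsub A a. \<forall>y\<in>Fsub A b. br x y \<in> Fsub A (a + b))"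

definition nonneg_spectrum :: "('a::euclidean_space \<Rightarrow>\<^sub>L 'a) \<Rightarrow> bool" where
  "nonneg_spectrum A \<longleftrightarrow> (\<forall>v l. v \<noteq> 0 \<and> blinfun_apply A v = l *\<^sub>R v \<longrightarrow> 0 \<le> l)"

definition op_trace :: "('a::euclidean_space \<Rightarrow>\<^sub>L 'a) \<Rightarrow> real" where
  "op_trace A = (\<Sum>b\<in>Basis. inner (blinfun_apply A b) b)"

definition Fplus :: "('a::euclidean_space \<Rightarrow> 'a \<Rightarrow> 'a) \<Rightarrow> ('a \<Rightarrow>\<^sub>L 'a) set" where
  "Fplus br = {A. symmetric_op A \<and> filtering br A \<and> nonneg_spectrum A \<and> op_trace A = 1}"

definition aut_group :: "('a::euclidean_space \<Rightarrow> 'a \<Rightarrow> 'a) \<Rightarrow> ('a \<Rightarrow>\<^sub>L 'a) set \<Rightarrow> 'a set \<Rightarrow> bool" where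
  "aut_group br AA h \<longleftrightarrow> compact AA \<and> id_blinfun \<in> AA \<and>
     (\<forall>f\<in>AA. \<forall>g\<in>AA. f o\<^sub>L g \<in> AA) \<and>
     (\<forall>f\<in>AA. \<exists>g\<in>AA. f o\<^sub>L g = id_blinfun \<and> g o\<^sub>L f = id_blinfun) \<and>
     (\<forall>f\<in>AA. (\<forall>x y. blinfun_apply f (br x y) = br (blinfun_apply f x) (blinfun_apply f y)) \<and>
               (\<forall>x y. inner (blinfun_apply f x) (blinfun_apply f y) = inner x y) \<and>
               blinfun_apply f ` h = h)"

definition AA_invariant :: "('a::euclidean_space \<Rightarrow>\<^sub>L 'a) set \<Rightarrow> 'a set \<Rightarrow> bool" where
  "AA_invariant AA k \<longleftrightarrow> (\<forall>f\<in>AA. blinfun_apply f ` k \<subseteq> k)"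

definition orth_proj :: "'a::euclidean_space set \<Rightarrow> 'a \<Rightarrow> 'a" where
  "orth_proj k x = (THE y. y \<in> k \<and> (\<forall>z\<in>k. inner (x - y) z = 0))"

definition chibar :: "'a::euclidean_space set \<Rightarrow> ('a \<Rightarrow>\<^sub>L 'a)" where
  "chibar k = Blinfun (\<lambda>x. (1 / (real DIM('a) - real (dim k))) *\<^sub>R (x - orth_proj k x))"

definition Dset :: "('a::euclidean_space \<Rightarrow> 'a \<Rightarrow> 'a) \<Rightarrow> ('a \<Rightarrow>\<^sub>L 'a) set \<Rightarrow> 'a set \<Rightarrow> ('a \<Rightarrow>\<^sub>L 'a) set" where
  "Dset br AA k = {A. symmetric_op A \<and> nonneg_spectrum A \<and> op_trace A = 1 \<and>
      (\<forall>f\<in>AA. A o\<^sub>L f = f o\<^sub>L A) \<and>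
      (\<forall>x\<in>k. blinfun_apply A x = 0) \<and>
      (\<forall>X\<in>k. \<forall>Y. blinfun_apply A (br X Y) = br X (blinfun_apply A Y))}"

definition Xset :: "('a::euclidean_space \<Rightarrow> 'a \<Rightarrow> 'a) \<Rightarrow> ('a \<Rightarrow>\<^sub>L 'a) set \<Rightarrow> 'a set \<Rightarrow> ('a \<Rightarrow>\<^sub>L 'a) set" where
  "Xset br AA k = Dset br AA k \<inter> Fplus br"

definition is_flag :: "('a::euclidean_space \<Rightarrow> 'a \<Rightarrow> 'a) \<Rightarrow> ('a \<Rightarrow>\<^sub>L 'a) set \<Rightarrow> 'a set \<Rightarrow> 'a set list \<Rightarrow> bool" where
  "is_flag br AA h fs \<longleftrightarrow> fs \<noteq> [] \<and>
     (\<forall>k\<in>set fs. subalgebra br k \<and> AA_invariant AA k \<and> h \<subset> k) \<and>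
     sorted_wrt (\<lambda>a b. b \<subset> a) fs"

definition flag_simplex :: "'a::euclidean_space set list \<Rightarrow> ('a \<Rightarrow>\<^sub>L 'a) set" where
  "flag_simplex fs = convex hull (chibar ` set fs)"

text \<open>Butterfly B[phi], for a choice Bf of B (Bf = Xset br AA or Bf = Dset br AA).\<close>
definition butterfly :: "('a::euclidean_space set \<Rightarrow> ('a \<Rightarrow>\<^sub>L 'a) set) \<Rightarrow> 'a set list \<Rightarrow> ('a \<Rightarrow>\<^sub>L 'a) set" where
  "butterfly Bf fs = \<Union>{closed_segment x y | x y. x \<in> Bf (hd fs) \<and> y \<in> flag_simplex (tl fs)}"

definition quotient_topology :: "'a topology \<Rightarrow> ('a \<times> 'a) set \<Rightarrow> 'a set topology" where
  "quotient_topology X R = topology (\<lambda>U. U \<subseteq> topspace X // R \<and> openin X (\<Union>U))"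

text \<open>Points (x, kappa, y) of S x [0,1] x T; at kappa = 0 the y-coordinate is collapsed,
  at kappa = 1 the x-coordinate is collapsed.\<close>
definition join_rel :: "'b::topological_space set \<Rightarrow> 'c::topological_space set \<Rightarrow> (('b \<times> real \<times> 'c) \<times> ('b \<times> real \<times> 'c)) set" where
  "join_rel S T = {((x, t, y), (x', t', y')).
      (x, t, y) \<in> S \<times> {0..1} \<times> T \<and> (x', t', y') \<in> S \<times> {0..1} \<times> T \<and>
      ((x, t, y) = (x', t', y') \<or> (t = 0 \<and> t' = 0 \<and> x = x') \<or> (t = 1 \<and> t' = 1 \<and> y = y'))}"

definition join_topology :: "'b::topological_space set \<Rightarrow> 'c::topological_space set \<Rightarrow> ('b \<times> real \<times> 'c) set topology" where
  "join_topology S T = quotient_topology (top_of_set (S \<times> {0..1} \<times> T)) (join_rel S T)"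

definition join_map :: "('b::real_vector \<times> real \<times> 'b) \<Rightarrow> 'b" where
  "join_map p = (case p of (x, t, y) \<Rightarrow> (1 - t) *\<^sub>R x + t *\<^sub>R y)"

end

theory Submission
  imports Defs
begin

text \<open>Points of D[f_1] vanish on f_1, whereas the vertices chibar f_i (i \<ge> 2) of the simplex
  restrict to linearly independent maps on f_1, because chibar f_i vanishes exactly on f_i and the
  f_i form a strictly decreasing chain inside f_1. Restricting an identity
  (1 - t) x + t y = (1 - s) x' + s y' to f_1 therefore recovers t and the barycentric coordinates
  of y, so join coordinates are unique and the join map is a continuous bijection onto the
  butterfly. It is a homeomorphism because the join is compact: D[f_1] is closed and bounded, and
  the filtering symmetric operators form a closed set, by a spectral perturbation argument.\<close>

section \<open>Spectral decomposition of symmetric operators\<close>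

lemma symmetric_opD: "symmetric_op A \<Longrightarrow> inner (A x) y = inner x (A y)"
  by (simp add: symmetric_op_def)

lemma linear_coeff_zero_if_quadratic_nonneg:
  fixes c D :: real
  assumes "\<And>s. 0 \<le> 2 * s * c + s\<^sup>2 * D"
  shows "c = 0"
proof (rule ccontr)
  assume "c \<noteq> 0"
  define q where "q = \<bar>D\<bar> + 1"
  have q: "1 \<le> q" "D \<le> q" by (auto simp: q_def)
  have "0 \<le> q\<^sup>2 * (2 * (- c / q) * c + (- c / q)\<^sup>2 * D)"
    using assms[of "- c / q"] by simp
  also have "\<dots> = c\<^sup>2 * (D - 2 * q)"
    using q by (simp add: power2_eq_square field_simps)
  also have "\<dots> < 0"
    using q \<open>c \<noteq> 0\<close> by (intro mult_pos_neg) auto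
  finally show False by simp
qed

lemma Rayleigh_minimiser_is_eigenvector:
  fixes A :: "'a::euclidean_space \<Rightarrow>\<^sub>L 'a"
  assumes sym: "symmetric_op A" and S: "subspace S" and inv: "\<And>x. x \<in> S \<Longrightarrow> A x \<in> S"
    and v: "v \<in> S" "norm v = 1"
    and min: "\<And>x. x \<in> S \<Longrightarrow> norm x = 1 \<Longrightarrow> inner (A v) v \<le> inner (A x) x"
  shows "A v = inner (A v) v *\<^sub>R v"
proof -
  define m where "m = inner (A v) v"
  have min': "m * inner x x \<le> inner (A x) x" if x: "x \<in> S" for x
  proof (cases "x = 0")
    case False
    have "m \<le> inner (A ((1 / norm x) *\<^sub>R x)) ((1 / norm x) *\<^sub>R x)"
      unfolding m_def using False S x by (intro min) (auto simp: subspace_scale)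
    also have "\<dots> = inner (A x) x / inner x x"
      by (simp add: blinfun.scaleR_right power2_norm_eq_inner[symmetric] power2_eq_square)
    moreover have "0 < inner x x" using False by simp
    ultimately show ?thesis by (metis pos_le_divide_eq)
  qed simp
  have orth: "inner (A v) w = 0" if w: "w \<in> S" "inner w v = 0" for w
  proof (rule linear_coeff_zero_if_quadratic_nonneg)
    fix s :: real
    define x where "x = v + s *\<^sub>R w"
    have "x \<in> S" using S v w by (simp add: x_def subspace_add subspace_scale)
    moreover have "inner x x = 1 + s\<^sup>2 * inner w w"
      using v w by (simp add: x_def inner_add_left inner_add_right inner_commute norm_eq_1 power2_eq_square)
    moreover have "inner (A x) x = m + 2 * s * inner (A v) w + s\<^sup>2 * inner (A w) w"
      using w symmetric_opD[OF sym, of w v]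
      by (simp add: x_def m_def blinfun.add_right blinfun.scaleR_right inner_add_left inner_add_right
          inner_commute power2_eq_square algebra_simps)
    ultimately show "0 \<le> 2 * s * inner (A v) w + s\<^sup>2 * (inner (A w) w - m * inner w w)"
      using min' by (fastforce simp: algebra_simps)
  qed
  define r where "r = A v - m *\<^sub>R v"
  have r: "r \<in> S" "inner r v = 0"
    using S v inv by (simp_all add: r_def subspace_diff subspace_scale m_def inner_diff_left norm_eq_1)
  have "inner (A v) r = 0" by (rule orth[OF r])
  moreover have "inner r r = inner r (A v) - m * inner r v"
    by (subst (1) r_def) (simp add: inner_diff_right)
  ultimately have "inner r r = 0" using r(2) by (simp add: inner_commute)
  hence "r = 0" by simp
  thus ?thesis by (simp add: r_def m_def)
qed

lemma symmetric_op_eigenvector_in_subspace: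
  fixes A :: "'a::euclidean_space \<Rightarrow>\<^sub>L 'a"
  assumes sym: "symmetric_op A" and S: "subspace S" "\<not> S \<subseteq> {0}" and inv: "\<And>x. x \<in> S \<Longrightarrow> A x \<in> S"
  obtains v l where "v \<in> S" "norm v = 1" "A v = l *\<^sub>R v"
proof -
  obtain y where y: "y \<in> S" "y \<noteq> 0" using S(2) by auto
  define K where "K = S \<inter> sphere 0 1"
  have "(1 / norm y) *\<^sub>R y \<in> K" using y S by (simp add: K_def subspace_scale)
  hence ne: "K \<noteq> {}" by auto
  have cpt: "compact K" unfolding K_def
    using closed_subspace[OF S(1)] by (intro closed_Int_compact compact_sphere)
  have cont: "continuous_on K (\<lambda>x. inner (A x) x)" by (intro continuous_intros)
  obtain v where v: "v \<in> K" and vmin: "\<forall>x\<in>K. inner (A v) v \<le> inner (A x) x"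
    using continuous_attains_inf[OF cpt ne cont] by blast
  have "v \<in> S" "norm v = 1" using v by (auto simp: K_def)
  moreover have "A v = inner (A v) v *\<^sub>R v"
    by (rule Rayleigh_minimiser_is_eigenvector[OF sym S(1) inv \<open>v \<in> S\<close> \<open>norm v = 1\<close>])
      (use vmin in \<open>auto simp: K_def\<close>)
  ultimately show ?thesis by (rule that)
qed

definition orthonormal_eigenbasis_on ::
    "('a::euclidean_space \<Rightarrow>\<^sub>L 'a) \<Rightarrow> 'a set \<Rightarrow> 'a set \<Rightarrow> ('a \<Rightarrow> real) \<Rightarrow> bool" where
  "orthonormal_eigenbasis_on A S E lam \<longleftrightarrow> finite E \<and> E \<subseteq> S \<and>
     (\<forall>e\<in>E. norm e = 1 \<and> A e = lam e *\<^sub>R e) \<and> (\<forall>e\<in>E. \<forall>e'\<in>E. e \<noteq> e' \<longrightarrow> inner e e' = 0) \<and>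
     (\<forall>x\<in>S. (\<Sum>e\<in>E. inner x e *\<^sub>R e) = x)"

abbreviation orthonormal_eigenbasis :: "('a::euclidean_space \<Rightarrow>\<^sub>L 'a) \<Rightarrow> 'a set \<Rightarrow> ('a \<Rightarrow> real) \<Rightarrow> bool"
  where "orthonormal_eigenbasis A \<equiv> orthonormal_eigenbasis_on A UNIV"

lemma orthonormal_eigenbasis_on_insert:
  fixes A :: "'a::euclidean_space \<Rightarrow>\<^sub>L 'a"
  assumes E: "orthonormal_eigenbasis_on A {x\<in>S. inner x v = 0} E lam"
    and S: "subspace S" and v: "v \<in> S" "norm v = 1" "A v = m *\<^sub>R v"
  shows "orthonormal_eigenbasis_on A S (insert v E) (lam(v := m))"
proof -
  have Ev: "inner v e = 0" if "e \<in> E" for e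
    using E that by (auto simp: orthonormal_eigenbasis_on_def inner_commute)
  moreover have "inner v v \<noteq> 0" using v(2) by auto
  ultimately have vE: "v \<notin> E" by blast
  have "(\<Sum>e\<in>insert v E. inner x e *\<^sub>R e) = x" if x: "x \<in> S" for x
  proof -
    define x' where "x' = x - inner x v *\<^sub>R v"
    have "x' \<in> {x\<in>S. inner x v = 0}" using x v S
      by (simp add: x'_def subspace_diff subspace_scale inner_diff_left norm_eq_1)
    hence "x' = (\<Sum>e\<in>E. inner x' e *\<^sub>R e)" using E by (simp add: orthonormal_eigenbasis_on_def)
    also have "\<dots> = (\<Sum>e\<in>E. inner x e *\<^sub>R e)"
      using Ev by (intro sum.cong refl) (simp add: x'_def inner_diff_left)
    finally show ?thesis using E vE by (simp add: orthonormal_eigenbasis_on_def x'_def algebra_simps)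
  qed
  moreover have "norm e = 1 \<and> A e = (lam(v := m)) e *\<^sub>R e" if "e \<in> insert v E" for e
    using that v vE E by (cases "e = v") (auto simp: orthonormal_eigenbasis_on_def)
  moreover have "inner e e' = 0" if "e \<in> insert v E" "e' \<in> insert v E" "e \<noteq> e'" for e e'
    using that E Ev inner_commute[of v] unfolding orthonormal_eigenbasis_on_def by (metis insert_iff)
  ultimately show ?thesis
    using E v(1) by (auto simp: orthonormal_eigenbasis_on_def)
qed

lemma orthonormal_eigenbasis_on_exists:
  fixes A :: "'a::euclidean_space \<Rightarrow>\<^sub>L 'a"
  assumes sym: "symmetric_op A"
  shows "subspace S \<Longrightarrow> (\<And>x. x \<in> S \<Longrightarrow> A x \<in> S) \<Longrightarrow> \<exists>E lam. orthonormal_eigenbasis_on A S E lam"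
proof (induction "dim S" arbitrary: S rule: less_induct)
  case less
  show ?case
  proof (cases "S \<subseteq> {0}")
    case True
    thus ?thesis unfolding orthonormal_eigenbasis_on_def by (intro exI[of _ "{}"]) auto
  next
    case False
    obtain v m where v: "v \<in> S" "norm v = 1" "A v = m *\<^sub>R v"
      using symmetric_op_eigenvector_in_subspace[OF sym less.prems(1) False less.prems(2)] by blast
    define S' where "S' = {x\<in>S. inner x v = 0}"
    have S': "subspace S'" "\<And>x. x \<in> S' \<Longrightarrow> A x \<in> S'"
      using less.prems symmetric_opD[OF sym, of _ v] v
      by (auto simp: S'_def subspace_def inner_add_left)
    have "v \<notin> S'" using v by (auto simp: S'_def inner_eq_zero_iff)
    moreover have "S' \<subseteq> S" by (auto simp: S'_def)
    ultimately have "S' \<subset> S" using v by blast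
    hence "dim S' < dim S"
      using S'(1) less.prems(1) by (metis dim_psubset span_eq_iff)
    from less.hyps[OF this S'] obtain E lam where "orthonormal_eigenbasis_on A S' E lam" by blast
    from orthonormal_eigenbasis_on_insert[OF this[unfolded S'_def] less.prems(1) v] show ?thesis by blast
  qed
qed

lemma orthonormal_eigenbasis_exists:
  assumes "symmetric_op A"
  obtains E lam where "orthonormal_eigenbasis A E lam"
  using orthonormal_eigenbasis_on_exists[OF assms subspace_UNIV UNIV_I] by blast

lemma orthonormal_eigenbasisD:
  assumes "orthonormal_eigenbasis A E lam"
  shows "finite E" "e \<in> E \<Longrightarrow> norm e = 1" "e \<in> E \<Longrightarrow> A e = lam e *\<^sub>R e"
    "e \<in> E \<Longrightarrow> e' \<in> E \<Longrightarrow> e \<noteq> e' \<Longrightarrow> inner e e' = 0" "(\<Sum>e\<in>E. inner x e *\<^sub>R e) = x"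
  using assms unfolding orthonormal_eigenbasis_on_def by auto

lemma orthonormal_eigenbasis_inner_sum:
  assumes es: "orthonormal_eigenbasis A E lam" and F: "F \<subseteq> E" and e': "e' \<in> E"
  shows "inner (\<Sum>e\<in>F. c e *\<^sub>R e) e' = (if e' \<in> F then c e' else 0)"
proof -
  have "inner (\<Sum>e\<in>F. c e *\<^sub>R e) e' = (\<Sum>e\<in>F. c e * inner e e')" by (simp add: inner_sum_left)
  also have "\<dots> = (\<Sum>e\<in>F. if e = e' then c e else 0)"
  proof (intro sum.cong refl)
    fix e assume "e \<in> F"
    with F e' orthonormal_eigenbasisD[OF es] show "c e * inner e e' = (if e = e' then c e else 0)"
      by (auto simp: norm_eq_1)
  qed
  also have "\<dots> = (if e' \<in> F then c e' else 0)"
    using F finite_subset[OF _ orthonormal_eigenbasisD(1)[OF es]] by (simp add: sum.delta')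
  finally show ?thesis .
qed

lemma Fsub_orthogonal_eigenvector:
  assumes sym: "symmetric_op A" and e: "A e = l *\<^sub>R e" and "c < l" and x: "x \<in> Fsub A c"
  shows "inner x e = 0"
proof (rule span_induct[OF x[unfolded Fsub_def], where P = "\<lambda>x. inner x e = 0"])
  show "subspace {x. inner x e = 0}" by (auto simp: subspace_def inner_add_left)
next
  fix v assume "v \<in> {v. v \<noteq> 0 \<and> (\<exists>l'\<le>c. A v = l' *\<^sub>R v)}"
  then obtain l' where l': "l' \<le> c" "A v = l' *\<^sub>R v" by auto
  have "l * inner v e = inner (A v) e" using symmetric_opD[OF sym, of v e] e by simp
  also have "\<dots> = l' * inner v e" by (simp add: l')
  finally show "inner v e = 0" using l' \<open>c < l\<close> by auto
qed

lemma Fsub_memI: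
  assumes es: "orthonormal_eigenbasis A E lam"
    and low: "\<And>e. e \<in> E \<Longrightarrow> inner x e \<noteq> 0 \<Longrightarrow> lam e \<le> c"
  shows "x \<in> Fsub A c"
proof -
  have "(\<Sum>e\<in>E. inner x e *\<^sub>R e) \<in> Fsub A c" unfolding Fsub_def
  proof (intro span_sum)
    fix e assume e: "e \<in> E"
    show "inner x e *\<^sub>R e \<in> span {v. v \<noteq> 0 \<and> (\<exists>l\<le>c. A v = l *\<^sub>R v)}"
    proof (cases "inner x e = 0")
      case False
      with e low orthonormal_eigenbasisD[OF es] show ?thesis
        by (intro span_mul span_base) (auto simp: norm_eq_1)
    qed (simp add: span_zero)
  qed
  thus ?thesis by (simp add: orthonormal_eigenbasisD(5)[OF es])
qed

lemma nonneg_spectrum_iff_psd: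
  fixes A :: "'a::euclidean_space \<Rightarrow>\<^sub>L 'a"
  assumes sym: "symmetric_op A"
  shows "nonneg_spectrum A \<longleftrightarrow> (\<forall>v. 0 \<le> inner (A v) v)"
proof
  assume ns: "nonneg_spectrum A"
  obtain E lam where es: "orthonormal_eigenbasis A E lam"
    using orthonormal_eigenbasis_exists[OF sym] .
  note E = orthonormal_eigenbasisD[OF es]
  have lam: "0 \<le> lam e" if "e \<in> E" for e
    using ns E(2,3)[OF that] unfolding nonneg_spectrum_def by (metis norm_zero zero_neq_one)
  show "\<forall>v. 0 \<le> inner (A v) v"
  proof
    fix v
    have "A v = A (\<Sum>e\<in>E. inner v e *\<^sub>R e)" by (simp add: E(5))
    also have "\<dots> = (\<Sum>e\<in>E. (inner v e * lam e) *\<^sub>R e)"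
      by (auto simp: blinfun.sum_right blinfun.scaleR_right E(3) intro!: sum.cong)
    finally have "inner (A v) v = (\<Sum>e\<in>E. lam e * (inner v e)\<^sup>2)"
      by (simp add: inner_sum_left inner_sum_right power2_eq_square inner_commute algebra_simps)
    also have "\<dots> \<ge> 0" using lam by (intro sum_nonneg mult_nonneg_nonneg) auto
    finally show "0 \<le> inner (A v) v" .
  qed
next
  assume psd: "\<forall>v. 0 \<le> inner (A v) v"
  show "nonneg_spectrum A" unfolding nonneg_spectrum_def
  proof (intro allI impI)
    fix v l assume v: "v \<noteq> 0 \<and> A v = l *\<^sub>R v"
    hence "0 \<le> l * inner v v" using psd[rule_format, of v] by simp
    moreover have "0 < inner v v" using v by simp
    ultimately show "0 \<le> l" by (simp add: zero_le_mult_iff)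
  qed
qed

section \<open>Filtering symmetric operators form a closed set\<close>

lemma spectral_gap_component_bound:
  fixes A B :: "'a::euclidean_space \<Rightarrow>\<^sub>L 'a"
  assumes es: "orthonormal_eigenbasis B E mu" and symB: "symmetric_op B"
    and Au: "A u = \<alpha> *\<^sub>R u" and F: "F \<subseteq> E"
    and gap: "(\<forall>e\<in>F. d \<le> mu e - \<alpha>) \<or> (\<forall>e\<in>F. d \<le> \<alpha> - mu e)"
  shows "d * norm (\<Sum>e\<in>F. inner u e *\<^sub>R e) \<le> norm (B - A) * norm u"
proof -
  define w where "w = (\<Sum>e\<in>F. inner u e *\<^sub>R e)"
  note E = orthonormal_eigenbasisD[OF es]
  have coord: "inner w e = inner u e" if "e \<in> F" for e
    using orthonormal_eigenbasis_inner_sum[OF es F, of e "\<lambda>e. inner u e"] F that by (auto simp: w_def)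
  have ww: "inner w w = (\<Sum>e\<in>F. (inner u e)\<^sup>2)"
    by (subst (2) w_def) (simp add: inner_sum_right coord power2_eq_square)
  have "inner ((B - A) u) w = inner u (B w) - \<alpha> * inner u w"
    using symmetric_opD[OF symB, of u w] by (simp add: blinfun.diff_left Au inner_diff_left)
  also have "B w = (\<Sum>e\<in>F. (inner u e * mu e) *\<^sub>R e)"
    using F by (auto simp: w_def blinfun.sum_right blinfun.scaleR_right E(3) intro!: sum.cong)
  finally have eq: "inner ((B - A) u) w = (\<Sum>e\<in>F. (mu e - \<alpha>) * (inner u e)\<^sup>2)"
    by (simp add: w_def inner_sum_right power2_eq_square sum_distrib_left sum_subtractf algebra_simps)
  have "d * inner w w \<le> \<bar>inner ((B - A) u) w\<bar>"
    using gap
  proof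
    assume "\<forall>e\<in>F. d \<le> mu e - \<alpha>"
    hence "d * inner w w \<le> (\<Sum>e\<in>F. (mu e - \<alpha>) * (inner u e)\<^sup>2)"
      unfolding ww sum_distrib_left by (intro sum_mono mult_right_mono) auto
    thus ?thesis using eq by linarith
  next
    assume "\<forall>e\<in>F. d \<le> \<alpha> - mu e"
    hence "d * inner w w \<le> (\<Sum>e\<in>F. (\<alpha> - mu e) * (inner u e)\<^sup>2)"
      unfolding ww sum_distrib_left by (intro sum_mono mult_right_mono) auto
    also have "\<dots> = - (\<Sum>e\<in>F. (mu e - \<alpha>) * (inner u e)\<^sup>2)"
      by (simp add: sum_negf[symmetric] algebra_simps)
    finally show ?thesis using eq by linarith
  qed
  also have "\<dots> \<le> norm ((B - A) u) * norm w" by (rule Cauchy_Schwarz_ineq2)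
  also have "\<dots> \<le> norm (B - A) * norm u * norm w" by (intro mult_right_mono norm_blinfun) simp
  finally have "(d * norm w) * norm w \<le> (norm (B - A) * norm u) * norm w"
    by (simp add: power2_norm_eq_inner[symmetric] power2_eq_square algebra_simps)
  thus ?thesis
    unfolding w_def[symmetric] by (cases "norm w = 0") (auto intro: mult_right_le_imp_le)
qed

lemma eigenvector_near_Fsub:
  fixes A B :: "'a::euclidean_space \<Rightarrow>\<^sub>L 'a"
  assumes es: "orthonormal_eigenbasis B E mu" and symB: "symmetric_op B"
    and Au: "A u = \<alpha> *\<^sub>R u" and d: "0 < d"
  shows "\<exists>u'\<in>Fsub B (\<alpha> + d). norm (u - u') \<le> norm (B - A) / d * norm u"
proof
  define L where "L = {e\<in>E. mu e \<le> \<alpha> + d}"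
  define u' where "u' = (\<Sum>e\<in>L. inner u e *\<^sub>R e)"
  note E = orthonormal_eigenbasisD[OF es]
  have "u - u' = (\<Sum>e\<in>E - L. inner u e *\<^sub>R e)"
    using sum.subset_diff[OF _ E(1), of L "\<lambda>e. inner u e *\<^sub>R e"] E(5)[of u]
    unfolding u'_def by (simp add: L_def[symmetric] algebra_simps) (auto simp: L_def)
  moreover have "d * norm (\<Sum>e\<in>E - L. inner u e *\<^sub>R e) \<le> norm (B - A) * norm u"
    by (rule spectral_gap_component_bound[OF es symB Au]) (auto simp: L_def)
  ultimately have "d * norm (u - u') \<le> norm (B - A) * norm u" by simp
  thus "norm (u - u') \<le> norm (B - A) / d * norm u"
    using d by (simp add: field_simps)
  show "u' \<in> Fsub B (\<alpha> + d)"
  proof (rule Fsub_memI[OF es])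
    fix e assume "e \<in> E" "inner u' e \<noteq> 0"
    thus "mu e \<le> \<alpha> + d"
      using orthonormal_eigenbasis_inner_sum[OF es _ \<open>e \<in> E\<close>, of L]
      by (auto simp: u'_def L_def split: if_splits)
  qed
qed

lemma eigenvector_near_Fsub_orthogonal:
  fixes A B :: "'a::euclidean_space \<Rightarrow>\<^sub>L 'a"
  assumes es: "orthonormal_eigenbasis B E mu" and symB: "symmetric_op B"
    and Aw: "A w = \<gamma> *\<^sub>R w" and d: "0 < d"
  shows "\<exists>w'. (\<forall>x\<in>Fsub B (\<gamma> - d). inner x w' = 0) \<and> norm (w - w') \<le> norm (B - A) / d * norm w"
proof (intro exI conjI)
  define H where "H = {e\<in>E. \<gamma> - d < mu e}"
  define w' where "w' = (\<Sum>e\<in>H. inner w e *\<^sub>R e)"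
  note E = orthonormal_eigenbasisD[OF es]
  have "w - w' = (\<Sum>e\<in>E - H. inner w e *\<^sub>R e)"
    using sum.subset_diff[OF _ E(1), of H "\<lambda>e. inner w e *\<^sub>R e"] E(5)[of w]
    unfolding w'_def by (simp add: H_def[symmetric] algebra_simps) (auto simp: H_def)
  moreover have "d * norm (\<Sum>e\<in>E - H. inner w e *\<^sub>R e) \<le> norm (B - A) * norm w"
    by (rule spectral_gap_component_bound[OF es symB Aw]) (auto simp: H_def)
  ultimately have "d * norm (w - w') \<le> norm (B - A) * norm w" by simp
  thus "norm (w - w') \<le> norm (B - A) / d * norm w"
    using d by (simp add: field_simps)
  show "\<forall>x\<in>Fsub B (\<gamma> - d). inner x w' = 0"
    unfolding w'_def inner_sum_right
    by (auto simp: H_def E(3) intro!: sum.neutral Fsub_orthogonal_eigenvector[OF symB])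
qed

lemma nonpos_if_le_multiples_of_small:
  fixes c M d :: real
  assumes le: "\<And>\<epsilon>. 0 < \<epsilon> \<Longrightarrow> \<epsilon> \<le> d \<Longrightarrow> c \<le> M * \<epsilon>" and "0 < d" "0 \<le> M"
  shows "c \<le> 0"
proof (rule ccontr)
  assume "\<not> c \<le> 0"
  hence c: "0 < c" by simp
  define \<epsilon> where "\<epsilon> = min d (c / (2 * (M + 1)))"
  have "0 < \<epsilon>" "\<epsilon> \<le> d" using c assms by (auto simp: \<epsilon>_def)
  hence "c \<le> M * \<epsilon>" by (rule le)
  also have "\<dots> \<le> M * (c / (2 * (M + 1)))" using assms by (intro mult_left_mono) (auto simp: \<epsilon>_def)
  also have "\<dots> < c"
  proof -
    have "0 < M * c + c * 2" using c assms(3) by (simp add: add_nonneg_pos)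
    with c assms(3) show ?thesis by (simp add: field_simps)
  qed
  finally show False by simp
qed

lemma inner_bilinear_bound:
  fixes br :: "'a::real_inner \<Rightarrow> 'a \<Rightarrow> 'a"
  assumes K: "\<And>x y. norm (br x y) \<le> norm x * norm y * K" "0 \<le> K"
    and "norm x \<le> a" "norm y \<le> b" "norm z \<le> c"
  shows "\<bar>inner (br x y) z\<bar> \<le> a * b * K * c"
proof -
  have "\<bar>inner (br x y) z\<bar> \<le> norm (br x y) * norm z" by (rule Cauchy_Schwarz_ineq2)
  also have "\<dots> \<le> (norm x * norm y * K) * c"
    using assms by (intro mult_mono) auto
  also have "\<dots> \<le> (a * b * K) * c"
    using assms by (intro mult_right_mono mult_mono) (auto intro: order_trans[OF norm_ge_zero])
  finally show ?thesis .
qed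

text \<open>The eigenvectors u, v, w of A lie close to the parts of the spectral filtration of B below
  \<alpha> + d, below \<beta> + d and (for w) orthogonal to everything below \<gamma> - d; the filtering property of B
  makes the bracket of the first two approximations orthogonal to the third.\<close>

lemma filtering_perturbation_bound:
  fixes A B :: "'a::euclidean_space \<Rightarrow>\<^sub>L 'a"
  assumes bil: "bilinear br" and K: "\<And>x y. norm (br x y) \<le> norm x * norm y * K" "0 \<le> K"
    and B: "symmetric_op B" "filtering br B"
    and Au: "A u = \<alpha> *\<^sub>R u" and Av: "A v = \<beta> *\<^sub>R v" and Aw: "A w = \<gamma> *\<^sub>R w"
    and d: "0 < d" "(\<alpha> + d) + (\<beta> + d) = \<gamma> - d" "norm (B - A) \<le> d"
  shows "\<bar>inner (br u v) w\<bar> \<le> 7 * K * norm u * norm v * norm w * (norm (B - A) / d)"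
proof -
  define \<delta> where "\<delta> = norm (B - A) / d"
  have \<delta>: "0 \<le> \<delta>" "\<delta> \<le> 1" using d by (auto simp: \<delta>_def)
  obtain E mu where es: "orthonormal_eigenbasis B E mu"
    using orthonormal_eigenbasis_exists[OF B(1)] .
  obtain u' where u': "u' \<in> Fsub B (\<alpha> + d)" "norm (u - u') \<le> \<delta> * norm u"
    using eigenvector_near_Fsub[OF es B(1) Au d(1)] unfolding \<delta>_def by blast
  obtain v' where v': "v' \<in> Fsub B (\<beta> + d)" "norm (v - v') \<le> \<delta> * norm v"
    using eigenvector_near_Fsub[OF es B(1) Av d(1)] unfolding \<delta>_def by blast
  obtain w' where w': "\<forall>x\<in>Fsub B (\<gamma> - d). inner x w' = 0" "norm (w - w') \<le> \<delta> * norm w"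
    using eigenvector_near_Fsub_orthogonal[OF es B(1) Aw d(1)] unfolding \<delta>_def by blast
  have u'_le: "norm u' \<le> 2 * norm u"
    using norm_triangle_ineq3[of u u'] u'(2) mult_left_le_one_le[OF _ \<delta>, of "norm u"] by simp
  have v'_le: "norm v' \<le> 2 * norm v"
    using norm_triangle_ineq3[of v v'] v'(2) mult_left_le_one_le[OF _ \<delta>, of "norm v"] by simp
  have "br u' v' \<in> Fsub B (\<gamma> - d)"
    using B(2) u'(1) v'(1) d(2) unfolding filtering_def by metis
  hence "inner (br u' v') w' = 0" using w'(1) by simp
  hence "inner (br u v) w = inner (br u' v') (w - w') + inner (br (u - u') v) w + inner (br u' (v - v')) w"
    by (simp add: bilinear_lsub[OF bil] bilinear_rsub[OF bil] inner_diff_left inner_diff_right)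
  also have "\<bar>\<dots>\<bar> \<le> (2 * norm u) * (2 * norm v) * K * (\<delta> * norm w)
      + (\<delta> * norm u) * norm v * K * norm w + (2 * norm u) * (\<delta> * norm v) * K * norm w"
    using inner_bilinear_bound[OF K] u'(2) v'(2) w'(2) u'_le v'_le
    by (smt (verit, best) order_refl)
  also have "\<dots> = 7 * K * norm u * norm v * norm w * \<delta>" by (simp add: algebra_simps)
  finally show ?thesis by (simp add: \<delta>_def)
qed

lemma limit_of_filtering_bracket_orthogonal:
  fixes A :: "'a::euclidean_space \<Rightarrow>\<^sub>L 'a"
  assumes bil: "bilinear br"
    and approx: "\<forall>\<epsilon>>0. \<exists>B. symmetric_op B \<and> filtering br B \<and> norm (B - A) < \<epsilon>"
    and Au: "A u = \<alpha> *\<^sub>R u" and Av: "A v = \<beta> *\<^sub>R v" and Aw: "A w = \<gamma> *\<^sub>R w" and "\<alpha> + \<beta> < \<gamma>"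
  shows "inner (br u v) w = 0"
proof -
  obtain K where K: "\<And>x y. norm (br x y) \<le> norm x * norm y * K" "0 < K"
    using bounded_bilinear.pos_bounded bil bilinear_conv_bounded_bilinear by blast
  define d where "d = (\<gamma> - \<alpha> - \<beta>) / 3"
  have d: "0 < d" "(\<alpha> + d) + (\<beta> + d) = \<gamma> - d" using \<open>\<alpha> + \<beta> < \<gamma>\<close> by (simp_all add: d_def field_simps)
  define M where "M = 7 * K * norm u * norm v * norm w / d"
  have "\<bar>inner (br u v) w\<bar> \<le> 0"
  proof (rule nonpos_if_le_multiples_of_small[OF _ d(1)])
    fix \<epsilon> :: real assume \<epsilon>: "0 < \<epsilon>" "\<epsilon> \<le> d"
    obtain B where B: "symmetric_op B" "filtering br B" "norm (B - A) < \<epsilon>"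
      using approx \<epsilon>(1) by blast
    have "\<bar>inner (br u v) w\<bar> \<le> 7 * K * norm u * norm v * norm w * (norm (B - A) / d)"
      using B \<epsilon>(2) K(2) by (intro filtering_perturbation_bound[OF bil K(1) _ B(1,2) Au Av Aw d]) auto
    also have "\<dots> \<le> 7 * K * norm u * norm v * norm w * (\<epsilon> / d)"
      using B(3) K(2) d(1) by (intro mult_left_mono divide_right_mono) auto
    finally show "\<bar>inner (br u v) w\<bar> \<le> M * \<epsilon>" by (simp add: M_def)
  qed (use K d in \<open>simp add: M_def\<close>)
  thus ?thesis by simp
qed

lemma filtering_if_eigenvector_brackets_orthogonal:
  fixes A :: "'a::euclidean_space \<Rightarrow>\<^sub>L 'a"
  assumes bil: "bilinear br" and sym: "symmetric_op A"
    and orth: "\<And>u v w \<alpha> \<beta> \<gamma>. A u = \<alpha> *\<^sub>R u \<Longrightarrow> A v = \<beta> *\<^sub>R v \<Longrightarrow> A w = \<gamma> *\<^sub>R w \<Longrightarrow>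
                 \<alpha> + \<beta> < \<gamma> \<Longrightarrow> inner (br u v) w = 0"
  shows "filtering br A"
  unfolding filtering_def
proof (intro allI ballI)
  fix a b x y assume x: "x \<in> Fsub A a" and y: "y \<in> Fsub A b"
  obtain E lam where es: "orthonormal_eigenbasis A E lam"
    using orthonormal_eigenbasis_exists[OF sym] .
  note E = orthonormal_eigenbasisD[OF es]
  have "inner (br x y) w = 0" if w: "w \<in> E" "a + b < lam w" for w
  proof -
    have "inner (br x y) w = (\<Sum>(e, e')\<in>E \<times> E. inner (br (inner x e *\<^sub>R e) (inner y e' *\<^sub>R e')) w)"
      using bilinear_sum[OF bil, of "\<lambda>e. inner x e *\<^sub>R e" E "\<lambda>e. inner y e *\<^sub>R e" E]
      by (simp add: E(5) inner_sum_left case_prod_unfold)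
    also have "\<dots> = 0"
    proof (intro sum.neutral ballI, clarify)
      fix e e' assume ee': "e \<in> E" "e' \<in> E"
      show "inner (br (inner x e *\<^sub>R e) (inner y e' *\<^sub>R e')) w = 0"
      proof (cases "lam e \<le> a \<and> lam e' \<le> b")
        case True
        with w show ?thesis
          by (intro orth[of _ "lam e" _ "lam e'" _ "lam w"])
            (auto simp: E(3) ee' blinfun.scaleR_right)
      next
        case False
        hence "inner x e = 0 \<or> inner y e' = 0"
          using Fsub_orthogonal_eigenvector[OF sym E(3) _ x] Fsub_orthogonal_eigenvector[OF sym E(3) _ y] ee'
          by force
        thus ?thesis by (auto simp: bilinear_lzero[OF bil] bilinear_rzero[OF bil])
      qed
    qed
    finally show ?thesis .
  qed
  thus "br x y \<in> Fsub A (a + b)"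
    by (intro Fsub_memI[OF es]) (meson not_le)
qed

lemma closed_symmetric_op: "closed {A::'a::euclidean_space \<Rightarrow>\<^sub>L 'a. symmetric_op A}"
  unfolding symmetric_op_def by (intro closed_Collect_all closed_Collect_eq continuous_intros)

lemma closed_filtering_symmetric_op:
  fixes br :: "'a::euclidean_space \<Rightarrow> 'a \<Rightarrow> 'a"
  assumes bil: "bilinear br"
  shows "closed {A::'a \<Rightarrow>\<^sub>L 'a. symmetric_op A \<and> filtering br A}"
proof -
  let ?S = "{A::'a \<Rightarrow>\<^sub>L 'a. symmetric_op A \<and> filtering br A}"
  have "A \<in> ?S" if "A \<in> closure ?S" for A
  proof -
    from that have approx: "\<forall>\<epsilon>>0. \<exists>B\<in>?S. dist B A < \<epsilon>" by (simp add: closure_approachable)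
    hence "\<forall>\<epsilon>>0. \<exists>B\<in>{A. symmetric_op A}. dist B A < \<epsilon>" by blast
    hence sym: "symmetric_op A" using closed_approachable[OF closed_symmetric_op, of A] by simp
    have approx': "\<forall>\<epsilon>>0. \<exists>B. symmetric_op B \<and> filtering br B \<and> norm (B - A) < \<epsilon>"
      using approx by (simp add: dist_norm)
    have "filtering br A"
    proof (rule filtering_if_eigenvector_brackets_orthogonal[OF bil sym])
      fix u v w \<alpha> \<beta> \<gamma>
      assume "A u = \<alpha> *\<^sub>R u" "A v = \<beta> *\<^sub>R v" "A w = \<gamma> *\<^sub>R w" "\<alpha> + \<beta> < \<gamma>"
      thus "inner (br u v) w = 0" by (rule limit_of_filtering_bracket_orthogonal[OF bil approx'])
    qed
    with sym show ?thesis by simp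
  qed
  hence "closure ?S \<subseteq> ?S" by blast
  thus ?thesis by (simp add: closure_subset_eq)
qed

section \<open>Compactness of D[k] and X[k]\<close>

lemma Dset_eq_Inter:
  fixes AA :: "('a::euclidean_space \<Rightarrow>\<^sub>L 'a) set"
  shows "Dset br AA k = {A. symmetric_op A} \<inter> {A::'a \<Rightarrow>\<^sub>L 'a. \<forall>v. 0 \<le> inner (A v) v} \<inter>
     {A::'a \<Rightarrow>\<^sub>L 'a. op_trace A = 1} \<inter> (\<Inter>f\<in>AA. {A. A o\<^sub>L f = f o\<^sub>L A}) \<inter>
     (\<Inter>x\<in>k. {A::'a \<Rightarrow>\<^sub>L 'a. A x = 0}) \<inter> (\<Inter>X\<in>k. {A::'a \<Rightarrow>\<^sub>L 'a. \<forall>Y. A (br X Y) = br X (A Y)})"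
  unfolding Dset_def using nonneg_spectrum_iff_psd by blast

lemma closed_Dset:
  fixes AA :: "('a::euclidean_space \<Rightarrow>\<^sub>L 'a) set"
  assumes bil: "bilinear br"
  shows "closed (Dset br AA k)"
proof -
  have psd: "closed {A::'a \<Rightarrow>\<^sub>L 'a. \<forall>v. 0 \<le> inner (A v) v}"
    by (intro closed_Collect_all closed_Collect_le continuous_intros)
  have trace: "closed {A::'a \<Rightarrow>\<^sub>L 'a. op_trace A = 1}"
    unfolding op_trace_def by (intro closed_Collect_eq continuous_intros)
  have commuting: "closed {A. A o\<^sub>L f = f o\<^sub>L A}" for f :: "'a \<Rightarrow>\<^sub>L 'a"
    by (intro closed_Collect_eq continuous_intros)
  have kernel: "closed {A::'a \<Rightarrow>\<^sub>L 'a. A x = 0}" for x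
    by (intro closed_Collect_eq continuous_intros)
  have equivariant: "closed {A::'a \<Rightarrow>\<^sub>L 'a. \<forall>Y. A (br X Y) = br X (A Y)}" for X
  proof -
    have "bounded_linear (br X)"
      using bil linear_conv_bounded_linear unfolding bilinear_def by blast
    then show ?thesis
      by (intro closed_Collect_all closed_Collect_eq continuous_intros bounded_linear.continuous_on[of "br X"])
  qed
  show ?thesis unfolding Dset_eq_Inter
    by (intro closed_Int closed_INT closed_symmetric_op ballI psd trace commuting kernel equivariant)
qed

lemma Dset_entry_bound:
  fixes AA :: "('a::euclidean_space \<Rightarrow>\<^sub>L 'a) set"
  assumes A: "A \<in> Dset br AA k" and b: "b \<in> Basis" "b' \<in> Basis"
  shows "\<bar>inner (A b) b'\<bar> \<le> 1"
proof -
  have sym: "symmetric_op A" and psd: "\<And>v. 0 \<le> inner (A v) v" and tr: "op_trace A = 1"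
    using A nonneg_spectrum_iff_psd by (auto simp: Dset_def)
  have diag: "inner (A c) c \<le> 1" if "c \<in> Basis" for c
    using member_le_sum[of c Basis "\<lambda>c. inner (A c) c"] psd that tr by (simp add: op_trace_def)
  have "inner (A b') b = inner (A b) b'"
    using symmetric_opD[OF sym, of b' b] by (simp add: inner_commute)
  hence "inner (A (b + b')) (b + b') = inner (A b) b + 2 * inner (A b) b' + inner (A b') b'"
    and "inner (A (b - b')) (b - b') = inner (A b) b - 2 * inner (A b) b' + inner (A b') b'"
    by (simp_all add: blinfun.add_right blinfun.diff_right inner_add_left inner_add_right
        inner_diff_left inner_diff_right)
  with psd[of "b + b'"] psd[of "b - b'"] diag[OF b(1)] diag[OF b(2)] show ?thesis
    by linarith
qed

lemma bounded_Dset: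
  fixes AA :: "('a::euclidean_space \<Rightarrow>\<^sub>L 'a) set"
  shows "bounded (Dset br AA k)"
  unfolding bounded_iff
proof (intro exI ballI)
  fix A assume A: "A \<in> Dset br AA k"
  have "norm A \<le> (\<Sum>b\<in>Basis. norm (A b))" by (rule norm_blinfun_euclidean_le)
  also have "\<dots> \<le> (\<Sum>b\<in>(Basis::'a set). \<Sum>b'\<in>(Basis::'a set). 1)"
  proof (intro sum_mono)
    fix b :: 'a assume "b \<in> Basis"
    have "norm (A b) \<le> (\<Sum>b'\<in>Basis. \<bar>inner (A b) b'\<bar>)" by (rule norm_le_l1)
    also have "\<dots> \<le> (\<Sum>b'\<in>(Basis::'a set). 1)"
      using Dset_entry_bound[OF A \<open>b \<in> Basis\<close>] by (intro sum_mono) auto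
    finally show "norm (A b) \<le> (\<Sum>b'\<in>(Basis::'a set). 1)" .
  qed
  finally show "norm A \<le> real DIM('a) * real DIM('a)" by simp
qed

lemma compact_Dset:
  fixes AA :: "('a::euclidean_space \<Rightarrow>\<^sub>L 'a) set"
  assumes "bilinear br"
  shows "compact (Dset br AA k)"
  using bounded_Dset closed_Dset[OF assms] by (simp add: compact_eq_bounded_closed)

lemma compact_Xset:
  fixes AA :: "('a::euclidean_space \<Rightarrow>\<^sub>L 'a) set"
  assumes "bilinear br"
  shows "compact (Xset br AA k)"
proof -
  have "Xset br AA k = Dset br AA k \<inter> {A. symmetric_op A \<and> filtering br A}"
    by (auto simp: Xset_def Fplus_def Dset_def)
  thus ?thesis
    using compact_Int_closed[OF compact_Dset closed_filtering_symmetric_op] assms by simp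
qed

section \<open>Quotient topologies and joins\<close>

lemma openin_quotient_topology:
  assumes eqv: "equiv (topspace X) R"
  shows "openin (quotient_topology X R) U \<longleftrightarrow> U \<subseteq> topspace X // R \<and> openin X (\<Union>U)"
proof -
  have "istopology (\<lambda>U. U \<subseteq> topspace X // R \<and> openin X (\<Union>U))"
    unfolding istopology_def
  proof (rule conjI; intro allI impI)
    fix U V assume U: "U \<subseteq> topspace X // R \<and> openin X (\<Union>U)" and V: "V \<subseteq> topspace X // R \<and> openin X (\<Union>V)"
    have "\<Union>(U \<inter> V) = \<Union>U \<inter> \<Union>V"
      using quotient_disj[OF eqv] U V by blast
    thus "U \<inter> V \<subseteq> topspace X // R \<and> openin X (\<Union>(U \<inter> V))" using U V by auto
  next
    fix K assume "\<forall>U\<in>K. U \<subseteq> topspace X // R \<and> openin X (\<Union>U)"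
    moreover have "\<Union>(\<Union>K) = \<Union>(Union ` K)" by auto
    ultimately show "\<Union>K \<subseteq> topspace X // R \<and> openin X (\<Union>(\<Union>K))"
      by (auto intro: openin_Union)
  qed
  thus ?thesis unfolding quotient_topology_def by simp
qed

lemma topspace_quotient_topology:
  assumes eqv: "equiv (topspace X) R"
  shows "topspace (quotient_topology X R) = topspace X // R"
proof
  have "topspace (quotient_topology X R) = \<Union>{U. openin (quotient_topology X R) U}"
    by (rule topspace_def)
  also have "\<dots> \<subseteq> topspace X // R" using openin_quotient_topology[OF eqv] by auto
  finally show "topspace (quotient_topology X R) \<subseteq> topspace X // R" .
  have "openin (quotient_topology X R) (topspace X // R)"
    using openin_quotient_topology[OF eqv] Union_quotient[OF eqv] by simp
  thus "topspace X // R \<subseteq> topspace (quotient_topology X R)" by (rule openin_subset)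
qed

lemma quotient_class_eq:
  assumes eqv: "equiv A R" and "c \<in> A // R" and "a \<in> c"
  shows "c = R``{a}"
  using assms by (metis Image_singleton_iff equiv_class_eq_iff quotientE)

lemma quotient_map_quotient_topology:
  assumes eqv: "equiv (topspace X) R"
  shows "quotient_map X (quotient_topology X R) (\<lambda>a. R``{a})"
  unfolding quotient_map_def topspace_quotient_topology[OF eqv]
proof (intro conjI allI impI)
  show "(\<lambda>a. R``{a}) ` topspace X = topspace X // R" by (auto simp: quotient_def)
next
  fix U assume U: "U \<subseteq> topspace X // R"
  have "{a \<in> topspace X. R``{a} \<in> U} = \<Union>U"
  proof
    show "{a \<in> topspace X. R``{a} \<in> U} \<subseteq> \<Union>U" using equiv_class_self[OF eqv] by blast
    show "\<Union>U \<subseteq> {a \<in> topspace X. R``{a} \<in> U}"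
      using quotient_class_eq[OF eqv] U in_quotient_imp_subset[OF eqv] by blast
  qed
  thus "openin X {a \<in> topspace X. R``{a} \<in> U} = openin (quotient_topology X R) U"
    using openin_quotient_topology[OF eqv] U by simp
qed

lemma compact_space_quotient_topology:
  assumes "equiv (topspace X) R" "compact_space X"
  shows "compact_space (quotient_topology X R)"
  using quotient_map_quotient_topology[OF assms(1)] assms(2)
  by (metis compact_space_def image_compactin quotient_imp_continuous_map quotient_imp_surjective_map)

lemma the_elem_image_class:
  assumes eqv: "equiv A R" and g: "\<And>a b. (a, b) \<in> R \<Longrightarrow> g a = g b" and a: "a \<in> A"
  shows "the_elem (g ` (R``{a})) = g a"
proof -
  have "g ` (R``{a}) = {g a}"
  proof (intro equalityI subsetI)
    fix z assume "z \<in> g ` (R``{a})"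
    then obtain b where "(a, b) \<in> R" "z = g b" by blast
    thus "z \<in> {g a}" using g[of a b] by simp
  qed (use equiv_class_self[OF eqv a] in blast)
  thus ?thesis by simp
qed

lemma continuous_map_quotient_topology:
  assumes eqv: "equiv (topspace X) R" and g: "continuous_map X Y g"
    and "\<And>a b. (a, b) \<in> R \<Longrightarrow> g a = g b"
  shows "continuous_map (quotient_topology X R) Y (\<lambda>c. the_elem (g ` c))"
proof (rule continuous_compose_quotient_map[OF quotient_map_quotient_topology[OF eqv]])
  show "continuous_map X Y ((\<lambda>c. the_elem (g ` c)) \<circ> (\<lambda>a. R``{a}))"
    by (rule continuous_map_eq[OF g]) (simp add: the_elem_image_class[OF eqv assms(3)])
qed

lemma equiv_join_rel: "equiv (S \<times> {0..1} \<times> T) (join_rel S T)"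
  unfolding equiv_def refl_on_def sym_def trans_def join_rel_def by auto

lemma join_map_respects_join_rel: "(a, b) \<in> join_rel S T \<Longrightarrow> join_map a = join_map b"
  unfolding join_rel_def join_map_def by auto

lemma join_map_image:
  "join_map ` (S \<times> {0..1} \<times> T) = \<Union>{closed_segment x y | x y. x \<in> S \<and> y \<in> T}"
proof (intro equalityI subsetI)
  fix z assume "z \<in> join_map ` (S \<times> {0..1} \<times> T)"
  then obtain x t y where "x \<in> S" "y \<in> T" "t \<in> {0..1}" "z = (1 - t) *\<^sub>R x + t *\<^sub>R y"
    by (auto simp: join_map_def)
  hence "z \<in> closed_segment x y" "x \<in> S" "y \<in> T" by (auto simp: closed_segment_def)
  thus "z \<in> \<Union>{closed_segment x y | x y. x \<in> S \<and> y \<in> T}" by blast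
next
  fix z assume "z \<in> \<Union>{closed_segment x y | x y. x \<in> S \<and> y \<in> T}"
  then obtain x y where "x \<in> S" "y \<in> T" "z \<in> closed_segment x y" by blast
  then obtain t where "t \<in> {0..1}" "z = join_map (x, t, y)"
    by (auto simp: closed_segment_def join_map_def)
  with \<open>x \<in> S\<close> \<open>y \<in> T\<close> show "z \<in> join_map ` (S \<times> {0..1} \<times> T)" by auto
qed

definition joinable :: "'b::real_vector set \<Rightarrow> 'b set \<Rightarrow> bool" where
  "joinable S T \<longleftrightarrow> (\<forall>x\<in>S. \<forall>y\<in>T. \<forall>x'\<in>S. \<forall>y'\<in>T. \<forall>t\<in>{0..1}. \<forall>s\<in>{0..1}.
      (1 - t) *\<^sub>R x + t *\<^sub>R y = (1 - s) *\<^sub>R x' + s *\<^sub>R y' \<longrightarrow>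
      t = s \<and> (t \<noteq> 0 \<longrightarrow> y = y') \<and> (t \<noteq> 1 \<longrightarrow> x = x'))"

lemma joinableD:
  assumes "joinable S T" "x \<in> S" "y \<in> T" "x' \<in> S" "y' \<in> T" "t \<in> {0..1}" "s \<in> {0..1}"
    and "(1 - t) *\<^sub>R x + t *\<^sub>R y = (1 - s) *\<^sub>R x' + s *\<^sub>R y'"
  shows "t = s \<and> (t \<noteq> 0 \<longrightarrow> y = y') \<and> (t \<noteq> 1 \<longrightarrow> x = x')"
  by (rule assms(1)[unfolded joinable_def, rule_format, OF assms(2-8)])

lemma joinable_join_map_eq_imp_join_rel:
  assumes J: "joinable S T" and ab: "a \<in> S \<times> {0..1} \<times> T" "b \<in> S \<times> {0..1} \<times> T"
    and eq: "join_map a = join_map b"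
  shows "(a, b) \<in> join_rel S T"
proof -
  obtain x t y x' s y' where a: "a = (x, t, y)" and b: "b = (x', s, y')" by (metis prod_cases3)
  with ab have mem: "x \<in> S" "y \<in> T" "x' \<in> S" "y' \<in> T" "t \<in> {0..1}" "s \<in> {0..1}" by auto
  from eq have "(1 - t) *\<^sub>R x + t *\<^sub>R y = (1 - s) *\<^sub>R x' + s *\<^sub>R y'" by (simp add: a b join_map_def)
  from joinableD[OF J mem this] have "t = s \<and> (t \<noteq> 0 \<longrightarrow> y = y') \<and> (t \<noteq> 1 \<longrightarrow> x = x')" .
  with mem show ?thesis unfolding a b join_rel_def by auto
qed

lemma joinable_segments_inter:
  assumes J: "joinable S T" and xy: "x \<in> S" "y \<in> T" "x' \<in> S" "y' \<in> T" "(x, y) \<noteq> (x', y')"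
  shows "closed_segment x y \<inter> closed_segment x' y' \<subseteq> {x, y} \<inter> {x', y'}"
proof
  fix z assume "z \<in> closed_segment x y \<inter> closed_segment x' y'"
  then obtain t s where ts: "t \<in> {0..1}" "s \<in> {0..1}"
    and z: "z = (1 - t) *\<^sub>R x + t *\<^sub>R y" "z = (1 - s) *\<^sub>R x' + s *\<^sub>R y'"
    unfolding closed_segment_def by auto
  from z have "(1 - t) *\<^sub>R x + t *\<^sub>R y = (1 - s) *\<^sub>R x' + s *\<^sub>R y'" by simp
  from joinableD[OF J xy(1-4) ts this] xy(5) z show "z \<in> {x, y} \<inter> {x', y'}"
    by (cases "t = 0"; cases "t = 1") auto
qed

lemma join_class_value:
  assumes "a \<in> S \<times> {0..1} \<times> T"
  shows "the_elem (join_map ` (join_rel S T``{a})) = join_map a"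
  by (rule the_elem_image_class[OF equiv_join_rel join_map_respects_join_rel assms])

lemma join_class_value_image:
  "(\<lambda>c. the_elem (join_map ` c)) ` ((S \<times> {0..1} \<times> T) // join_rel S T)
     = \<Union>{closed_segment x y | x y. x \<in> S \<and> y \<in> T}"
proof -
  have "(S \<times> {0..1} \<times> T) // join_rel S T = (\<lambda>a. join_rel S T``{a}) ` (S \<times> {0..1} \<times> T)"
    by (auto simp: quotient_def)
  hence "(\<lambda>c. the_elem (join_map ` c)) ` ((S \<times> {0..1} \<times> T) // join_rel S T)
           = (\<lambda>a. the_elem (join_map ` (join_rel S T``{a}))) ` (S \<times> {0..1} \<times> T)"
    by (simp add: image_image)
  also have "\<dots> = join_map ` (S \<times> {0..1} \<times> T)" using join_class_value by (rule image_cong[OF refl])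
  finally show ?thesis by (simp add: join_map_image)
qed

lemma joinable_inj_on_join_class_value:
  assumes J: "joinable S T"
  shows "inj_on (\<lambda>c. the_elem (join_map ` c)) ((S \<times> {0..1} \<times> T) // join_rel S T)"
proof (rule inj_onI)
  fix c c' assume "c \<in> (S \<times> {0..1} \<times> T) // join_rel S T" "c' \<in> (S \<times> {0..1} \<times> T) // join_rel S T"
    and eq: "the_elem (join_map ` c) = the_elem (join_map ` c')"
  then obtain a b where ab: "a \<in> S \<times> {0..1} \<times> T" "b \<in> S \<times> {0..1} \<times> T"
    "c = join_rel S T``{a}" "c' = join_rel S T``{b}"
    by (auto elim!: quotientE)
  with eq join_class_value have "join_map a = join_map b" by metis
  with J ab(1,2) have "(a, b) \<in> join_rel S T" by (rule joinable_join_map_eq_imp_join_rel)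
  thus "c = c'" using ab equiv_class_eq_iff[OF equiv_join_rel] by metis
qed

lemma homeomorphic_map_join:
  fixes S T :: "'b::real_normed_vector set"
  assumes "compact S" "compact T" and J: "joinable S T"
  shows "homeomorphic_map (join_topology S T)
           (top_of_set (\<Union>{closed_segment x y | x y. x \<in> S \<and> y \<in> T})) (\<lambda>c. the_elem (join_map ` c))"
proof -
  define X where "X = top_of_set (S \<times> {0..1::real} \<times> T)"
  let ?B = "\<Union>{closed_segment x y | x y. x \<in> S \<and> y \<in> T}"
  have eqv: "equiv (topspace X) (join_rel S T)" using equiv_join_rel by (simp add: X_def)
  have tQ: "topspace (quotient_topology X (join_rel S T)) = (S \<times> {0..1} \<times> T) // join_rel S T"
    using topspace_quotient_topology[OF eqv] by (simp add: X_def)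
  have "continuous_map X (top_of_set ?B) join_map"
  proof (rule continuous_map_into_subtopology)
    have jm: "join_map = (\<lambda>p. (1 - fst (snd p)) *\<^sub>R fst p + fst (snd p) *\<^sub>R snd (snd p))"
      by (auto simp: join_map_def fun_eq_iff split: prod.splits)
    show "continuous_map X euclidean join_map"
      unfolding X_def continuous_map_iff_continuous jm by (intro continuous_intros)
    show "join_map \<in> topspace X \<rightarrow> ?B"
      using join_map_image[of S T] by (simp add: X_def flip: image_subset_iff_funcset)
  qed
  hence "continuous_map (quotient_topology X (join_rel S T)) (top_of_set ?B) (\<lambda>c. the_elem (join_map ` c))"
    by (rule continuous_map_quotient_topology[OF eqv _ join_map_respects_join_rel])
  moreover have "compact_space (quotient_topology X (join_rel S T))"
    using assms(1,2) eqv
    by (intro compact_space_quotient_topology) (simp_all add: X_def compact_Times compact_space_subtopology)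
  ultimately show ?thesis
    unfolding join_topology_def X_def[symmetric] using join_class_value_image joinable_inj_on_join_class_value[OF J]
    by (intro continuous_imp_homeomorphic_map Hausdorff_space_subtopology) (simp_all add: tQ)
qed

section \<open>The simplex of a flag\<close>

lemma orth_proj_residual_unique:
  fixes k :: "'a::euclidean_space set"
  assumes "subspace k" "y \<in> k" "\<forall>z\<in>k. inner (x - y) z = 0" "y' \<in> k" "\<forall>z\<in>k. inner (x - y') z = 0"
  shows "y = y'"
proof -
  have "y - y' \<in> k" using assms by (simp add: subspace_diff)
  hence "inner (x - y') (y - y') - inner (x - y) (y - y') = 0" using assms by simp
  hence "inner (y - y') (y - y') = 0" by (simp add: inner_diff_left inner_diff_right algebra_simps)
  thus ?thesis by simp
qed

lemma orth_proj_eqI: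
  fixes k :: "'a::euclidean_space set"
  assumes k: "subspace k" and y: "y \<in> k" "\<forall>z\<in>k. inner (x - y) z = 0"
  shows "orth_proj k x = y"
  unfolding orth_proj_def
  by (rule the_equality) (use y orth_proj_residual_unique[OF k] in blast)+

lemma orth_proj_in_and_orthogonal:
  fixes k :: "'a::euclidean_space set"
  assumes k: "subspace k"
  shows "orth_proj k x \<in> k" "\<forall>z\<in>k. inner (x - orth_proj k x) z = 0"
proof -
  obtain y z where "y \<in> span k" "\<And>w. w \<in> span k \<Longrightarrow> orthogonal z w" "x = y + z"
    using orthogonal_subspace_decomp_exists[of k x] by blast
  hence y: "y \<in> k" "\<forall>w\<in>k. inner (x - y) w = 0"
    using span_eq_iff[THEN iffD2, OF k] by (simp_all add: orthogonal_def)
  thus "orth_proj k x \<in> k" "\<forall>z\<in>k. inner (x - orth_proj k x) z = 0"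
    using orth_proj_eqI[OF k y] by simp_all
qed

lemma linear_orth_proj:
  fixes k :: "'a::euclidean_space set"
  assumes k: "subspace k"
  shows "linear (orth_proj k)"
proof (rule linearI)
  fix x y :: 'a
  show "orth_proj k (x + y) = orth_proj k x + orth_proj k y"
    using orth_proj_in_and_orthogonal[OF k, of x] orth_proj_in_and_orthogonal[OF k, of y] k
    by (intro orth_proj_eqI) (auto simp: subspace_add inner_diff_left inner_add_left algebra_simps)
next
  fix c :: real and x :: 'a
  show "orth_proj k (c *\<^sub>R x) = c *\<^sub>R orth_proj k x"
    using orth_proj_in_and_orthogonal[OF k, of x] k
    by (intro orth_proj_eqI) (simp_all add: subspace_scale flip: scaleR_diff_right)
qed

lemma chibar_apply:
  fixes k :: "'a::euclidean_space set"
  assumes k: "subspace k"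
  shows "chibar k x = (1 / (real DIM('a) - real (dim k))) *\<^sub>R (x - orth_proj k x)"
proof -
  have "bounded_linear (orth_proj k)"
    using linear_orth_proj[OF k] by (simp add: linear_conv_bounded_linear)
  hence "bounded_linear (\<lambda>x. (1 / (real DIM('a) - real (dim k))) *\<^sub>R (x - orth_proj k x))"
    by (intro bounded_linear_compose[OF bounded_linear_scaleR_right] bounded_linear_sub bounded_linear_ident)
  thus ?thesis unfolding chibar_def by (simp add: bounded_linear_Blinfun_apply)
qed

lemma chibar_eq_0_iff:
  fixes k :: "'a::euclidean_space set"
  assumes k: "subspace k" "k \<noteq> UNIV"
  shows "chibar k x = 0 \<longleftrightarrow> x \<in> k"
proof -
  have "dim k \<noteq> DIM('a)" using k dim_eq_full[of k] by (metis span_eq_iff)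
  hence "dim k < DIM('a)" using dim_subset_UNIV[of k] by simp
  hence "chibar k x = 0 \<longleftrightarrow> x = orth_proj k x" by (simp add: chibar_apply[OF k(1)])
  also have "\<dots> \<longleftrightarrow> x \<in> k"
    using orth_proj_in_and_orthogonal(1)[OF k(1), of x] orth_proj_eqI[OF k(1), of x x] by auto
  finally show ?thesis .
qed

lemma chibar_chain_independent:
  fixes ts :: "'a::euclidean_space set list"
  assumes "sorted_wrt (\<lambda>a b. b \<subset> a) ts" "\<forall>k\<in>set ts. subspace k \<and> k \<subset> f"
    and "\<forall>p\<in>f. (\<Sum>k\<in>set ts. a k *\<^sub>R chibar k p) = 0"
  shows "\<forall>k\<in>set ts. a k = 0"
  using assms
proof (induction ts arbitrary: f)
  case (Cons k ks)
  have k: "subspace k" "k \<subset> f" "k \<notin> set ks" using Cons.prems(1,2) by auto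
  hence kU: "k \<noteq> UNIV" by auto
  have eq: "a k *\<^sub>R chibar k p + (\<Sum>k\<in>set ks. a k *\<^sub>R chibar k p) = 0" if "p \<in> f" for p
    using Cons.prems(3) that k(3) by simp
  have "\<forall>p\<in>k. (\<Sum>k\<in>set ks. a k *\<^sub>R chibar k p) = 0"
  proof
    fix p assume "p \<in> k"
    with eq[OF psubsetD[OF k(2) this]] chibar_eq_0_iff[OF k(1) kU, of p]
    show "(\<Sum>k\<in>set ks. a k *\<^sub>R chibar k p) = 0" by simp
  qed
  with Cons.prems(1,2) have ks0: "\<forall>k\<in>set ks. a k = 0"
    by (intro Cons.IH[of k]) auto
  obtain p where "p \<in> f" "p \<notin> k" using k(2) by auto
  with eq[of p] ks0 chibar_eq_0_iff[OF k(1) kU, of p] have "a k = 0" by simp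
  with ks0 show ?case by simp
qed simp

lemma flag_simplex_barycentric:
  fixes ts :: "'a::euclidean_space set list"
  assumes ts: "\<forall>k\<in>set ts. subspace k \<and> k \<noteq> UNIV" and y: "y \<in> flag_simplex ts"
  obtains u where "\<forall>k\<in>set ts. 0 \<le> u k" "sum u (set ts) = 1" "y = (\<Sum>k\<in>set ts. u k *\<^sub>R chibar k)"
proof -
  have inj: "inj_on chibar (set ts)"
  proof (rule inj_onI)
    fix k k' assume "k \<in> set ts" "k' \<in> set ts" "chibar k = chibar k'"
    with ts chibar_eq_0_iff show "k = k'" by (metis subsetI subset_antisym)
  qed
  obtain u where u: "\<forall>z\<in>chibar ` set ts. 0 \<le> u z" "sum u (chibar ` set ts) = 1"
      "(\<Sum>z\<in>chibar ` set ts. u z *\<^sub>R z) = y"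
    using y unfolding flag_simplex_def by (auto simp: convex_hull_finite)
  show ?thesis
  proof (rule that[of "u \<circ> chibar"])
    show "\<forall>k\<in>set ts. 0 \<le> (u \<circ> chibar) k" using u(1) by simp
    show "sum (u \<circ> chibar) (set ts) = 1" using u(2) sum.reindex[OF inj, of u] by simp
    show "y = (\<Sum>k\<in>set ts. (u \<circ> chibar) k *\<^sub>R chibar k)"
      using u(3) sum.reindex[OF inj, of "\<lambda>z. u z *\<^sub>R z"] by (simp add: o_def)
  qed
qed

lemma joinable_flag_simplex:
  fixes S :: "('a::euclidean_space \<Rightarrow>\<^sub>L 'a) set" and ts :: "'a set list"
  assumes ts: "sorted_wrt (\<lambda>a b. b \<subset> a) ts" "\<forall>k\<in>set ts. subspace k \<and> k \<subset> f"
    and S: "\<forall>x\<in>S. \<forall>p\<in>f. x p = 0"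
  shows "joinable S (flag_simplex ts)"
  unfolding joinable_def
proof (intro ballI impI)
  fix x y x' y' and t s :: real
  assume x: "x \<in> S" and y: "y \<in> flag_simplex ts" and x': "x' \<in> S" and y': "y' \<in> flag_simplex ts"
    and "t \<in> {0..1}" "s \<in> {0..1}" and eq: "(1 - t) *\<^sub>R x + t *\<^sub>R y = (1 - s) *\<^sub>R x' + s *\<^sub>R y'"
  have ts': "\<forall>k\<in>set ts. subspace k \<and> k \<noteq> UNIV" using ts(2) by auto
  obtain u where u: "\<forall>k\<in>set ts. 0 \<le> u k" "sum u (set ts) = 1" "y = (\<Sum>k\<in>set ts. u k *\<^sub>R chibar k)"
    using flag_simplex_barycentric[OF ts' y] .
  obtain u' where u': "\<forall>k\<in>set ts. 0 \<le> u' k" "sum u' (set ts) = 1" "y' = (\<Sum>k\<in>set ts. u' k *\<^sub>R chibar k)"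
    using flag_simplex_barycentric[OF ts' y'] .
  have "\<forall>p\<in>f. (\<Sum>k\<in>set ts. (t * u k - s * u' k) *\<^sub>R chibar k p) = 0"
  proof
    fix p assume "p \<in> f"
    have "((1 - t) *\<^sub>R x + t *\<^sub>R y) p = ((1 - s) *\<^sub>R x' + s *\<^sub>R y') p" using eq by simp
    with \<open>p \<in> f\<close> S x x' have "t *\<^sub>R y p = s *\<^sub>R y' p"
      by (simp add: blinfun.add_left blinfun.scaleR_left)
    thus "(\<Sum>k\<in>set ts. (t * u k - s * u' k) *\<^sub>R chibar k p) = 0"
      by (simp add: u(3) u'(3) blinfun.sum_left blinfun.scaleR_left scaleR_sum_right scaleR_diff_left sum_subtractf)
  qed
  with ts have tu: "\<forall>k\<in>set ts. t * u k = s * u' k"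
    using chibar_chain_independent[of ts f "\<lambda>k. t * u k - s * u' k"] by simp
  have "t = (\<Sum>k\<in>set ts. t * u k)" using u(2) by (simp flip: sum_distrib_left)
  also have "\<dots> = s" using tu u'(2) by (simp flip: sum_distrib_left)
  finally have "t = s" .
  moreover have y_eq: "y = y'" if "t \<noteq> 0"
    using tu \<open>t = s\<close> that u(3) u'(3) by simp
  moreover have "x = x'" if "t \<noteq> 1"
  proof (cases "t = 0")
    case False
    with eq y_eq \<open>t = s\<close> have "(1 - t) *\<^sub>R x = (1 - t) *\<^sub>R x'" by simp
    with that show ?thesis by simp
  qed (use eq \<open>t = s\<close> in simp)
  ultimately show "t = s \<and> (t \<noteq> 0 \<longrightarrow> y = y') \<and> (t \<noteq> 1 \<longrightarrow> x = x')" by blast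
qed

theorem lemma5p3:
  fixes br :: "'a::euclidean_space \<Rightarrow> 'a \<Rightarrow> 'a"
    and AA :: "('a \<Rightarrow>\<^sub>L 'a) set"
    and h :: "'a set"
    and fs :: "'a set list"
    and Bf :: "'a set \<Rightarrow> ('a \<Rightarrow>\<^sub>L 'a) set"
  assumes "lie_bracket br" and "ad_invariant_inner br"
    and "subalgebra br h" and "h \<noteq> UNIV"
    and "aut_group br AA h"
    and "is_flag br AA h fs" and "length fs > 1" and "UNIV \<notin> set fs"
    and "Bf = Xset br AA \<or> Bf = Dset br AA"
  shows "(\<forall>x\<in>Bf (hd fs). \<forall>y\<in>flag_simplex (tl fs). \<forall>x'\<in>Bf (hd fs). \<forall>y'\<in>flag_simplex (tl fs).
            (x, y) \<noteq> (x', y') \<longrightarrow>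
            closed_segment x y \<inter> closed_segment x' y' \<subseteq> {x, y} \<inter> {x', y'})
       \<and> homeomorphic_map (join_topology (Bf (hd fs)) (flag_simplex (tl fs)))
            (top_of_set (butterfly Bf fs)) (\<lambda>c. the_elem (join_map ` c))"
proof -
  have bil: "bilinear br" using assms(1) by (simp add: lie_bracket_def)
  obtain f1 ts where fs: "fs = f1 # ts" using assms(7) by (cases fs) auto
  have ts: "sorted_wrt (\<lambda>a b. b \<subset> a) ts" "\<forall>k\<in>set ts. subspace k \<and> k \<subset> f1"
    using assms(6) by (auto simp: is_flag_def subalgebra_def fs)
  have "compact (Bf f1)" using assms(9) compact_Xset[OF bil] compact_Dset[OF bil] by auto
  moreover have "compact (flag_simplex ts)"
    unfolding flag_simplex_def by (intro finite_imp_compact_convex_hull) simp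
  moreover have J: "joinable (Bf f1) (flag_simplex ts)"
    using assms(9) by (intro joinable_flag_simplex[OF ts]) (auto simp: Xset_def Dset_def)
  ultimately show ?thesis
    unfolding fs butterfly_def using joinable_segments_inter[OF J] homeomorphic_map_join by simp
qed

end
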